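(* Let $S$ be a restriction monoid generated, as an algebra of type $(2,1,1,0)$, by a set $A$; let $T=A^*$, $E=P(S)$, and for $v\in T$ let $\overline{v}$ be the value of $v$ in $S$. For $v\in T$ and $e\in E$ let $v\cdot e$ be defined iff $\overline{v}^*\ge e$, and then $v\cdot e=(\overline{v}e)^+$. Then: (1) $\cdot$ is a partially defined action of $T$ on $E$ (satisfying axioms (A), (B), (C)), and the monoid $M(T,E)$ is ultra $F$-restriction (and ample); (2) the map $M(T,E)\to S$, $(e,v)\mapsto e\overline{v}$, is a surjective projection separating homomorphism of $(2,1,1,0)$-algebras.
   Context: Restriction semigroup: algebra $(S,\cdot,{}^*,{}^+)$ with $(S,\cdot)$ a semigroup satisfying $xx^*=x$, $x^*y^*=y^*x^*$, $(xy^* )^*=x^*y^*$, $x^*y=y(xy)^*$, $x^+x=x$, $x^+y^+=y^+x^+$, $(x^+y)^+=x^+y^+$, $xy^+=(xy)^+x$, $(x^+)^*=x^+$, $(x^* )^+=x^*$; a restriction monoid has an identity $1$ (type $(2,1,1,0)$). $P(S)=\{x^*\}$ is the semilattice of projections; $\sigma$ is the least congruence identifying projections; $S$ is proper if ($a^*=b^*$, $a\sigma b$) or ($a^+=b^+$, $a\sigma b$) imply $a=b$; $F$-restriction if each $\sigma$-class has a maximum in the order $a\le b\iff a=eb$ ($e\in P(S)$); ample if $ac=bc\Rightarrow ac^+=bc^+$ and $ca=cb\Rightarrow c^*a=c^*b$. A homomorphism is projection separating if it is injective on projections. Left partial action of monoid $T$ on semilattice $Y$: $1\cdot y=y$; if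 $t\cdot y$, $s\cdot(t\cdot y)$ defined then $(st)\cdot y$ defined and equal. Axioms with $\varphi_t\colon y\mapsto t\cdot y$: (A) $\mathrm{dom}\varphi_t,\mathrm{ran}\varphi_t$ order ideals; (B) $\varphi_t$ an order-isomorphism between them; (C) $\mathrm{dom}\varphi_t\ne\varnothing$. Partially defined action: $(st)\cdot x$ defined iff $t\cdot x$ and $s\cdot(t\cdot x)$ defined. Reverse: $y\circ t=\varphi_t^{-1}(y)$ for $y\in\mathrm{ran}\varphi_t$. $M(T,Y)=\{(y,t)\colon y\circ t\text{ defined}\}$, $(x,s)(y,t)=(s\cdot((x\circ s)\wedge y),st)$, $(y,t)^*=(y\circ t,1)$, $(y,t)^+=(y,1)$. Underlying left partial action of a proper restriction semigroup $S$: $t\cdot e$ ($t\in S/\sigma$) defined iff some $a\in t$ has $a^*\ge e$, value $(ae)^+$. Ultra $F$-restriction: proper, $F$-restriction, and the underlying left partial action is a partially defined action. *)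

theory Defs
  imports Main
begin

record 'a rmonoid =
  car :: "'a set"
  mul :: "'a \<Rightarrow> 'a \<Rightarrow> 'a"
  rs  :: "'a \<Rightarrow> 'a"    (* x^* *)
  rp  :: "'a \<Rightarrow> 'a"    (* x^+ *)
  idt :: "'a"

definition restriction_semigroup :: "('a, 'b) rmonoid_scheme \<Rightarrow> bool" where
  "restriction_semigroup S \<longleftrightarrow>
     (\<forall>x\<in>car S. \<forall>y\<in>car S. mul S x y \<in> car S) \<and>
     (\<forall>x\<in>car S. rs S x \<in> car S \<and> rp S x \<in> car S) \<and>
     (\<forall>x\<in>car S. \<forall>y\<in>car S. \<forall>z\<in>car S. mul S (mul S x y) z = mul S x (mul S y z)) \<and>
     (\<forall>x\<in>car S. \<forall>y\<in>car S.
        mul S x (rs S x) = x \<and>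
        mul S (rs S x) (rs S y) = mul S (rs S y) (rs S x) \<and>
        rs S (mul S x (rs S y)) = mul S (rs S x) (rs S y) \<and>
        mul S (rs S x) y = mul S y (rs S (mul S x y)) \<and>
        mul S (rp S x) x = x \<and>
        mul S (rp S x) (rp S y) = mul S (rp S y) (rp S x) \<and>
        rp S (mul S (rp S x) y) = mul S (rp S x) (rp S y) \<and>
        mul S x (rp S y) = mul S (rp S (mul S x y)) x \<and>
        rs S (rp S x) = rp S x \<and>
        rp S (rs S x) = rs S x)"

definition restriction_monoid :: "('a, 'b) rmonoid_scheme \<Rightarrow> bool" where
  "restriction_monoid S \<longleftrightarrow> restriction_semigroup S \<and> idt S \<in> car S \<and>
     (\<forall>x\<in>car S. mul S (idt S) x = x \<and> mul S x (idt S) = x)"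

definition proj :: "('a, 'b) rmonoid_scheme \<Rightarrow> 'a set" where
  "proj S = rs S ` car S"

definition nleq :: "('a, 'b) rmonoid_scheme \<Rightarrow> 'a \<Rightarrow> 'a \<Rightarrow> bool" where
  "nleq S a b \<longleftrightarrow> (\<exists>e\<in>proj S. a = mul S e b)"

definition rcong :: "('a, 'b) rmonoid_scheme \<Rightarrow> ('a \<times> 'a) set \<Rightarrow> bool" where
  "rcong S R \<longleftrightarrow> equiv (car S) R \<and>
     (\<forall>a b c. (a, b) \<in> R \<and> c \<in> car S \<longrightarrow> (mul S a c, mul S b c) \<in> R \<and> (mul S c a, mul S c b) \<in> R) \<and>
     (\<forall>a b. (a, b) \<in> R \<longrightarrow> (rs S a, rs S b) \<in> R \<and> (rp S a, rp S b) \<in> R)"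

definition sigma :: "('a, 'b) rmonoid_scheme \<Rightarrow> ('a \<times> 'a) set" where
  "sigma S = \<Inter> {R. rcong S R \<and> proj S \<times> proj S \<subseteq> R}"

definition proper :: "('a, 'b) rmonoid_scheme \<Rightarrow> bool" where
  "proper S \<longleftrightarrow> (\<forall>a\<in>car S. \<forall>b\<in>car S.
     ((rs S a = rs S b \<and> (a, b) \<in> sigma S) \<longrightarrow> a = b) \<and>
     ((rp S a = rp S b \<and> (a, b) \<in> sigma S) \<longrightarrow> a = b))"

definition F_restriction :: "('a, 'b) rmonoid_scheme \<Rightarrow> bool" where
  "F_restriction S \<longleftrightarrow> (\<forall>a\<in>car S. \<exists>m\<in>sigma S `` {a}. \<forall>b\<in>sigma S `` {a}. nleq S b m)"

definition ample :: "('a, 'b) rmonoid_scheme \<Rightarrow> bool" where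
  "ample S \<longleftrightarrow> (\<forall>a\<in>car S. \<forall>b\<in>car S. \<forall>c\<in>car S.
     (mul S a c = mul S b c \<longrightarrow> mul S a (rp S c) = mul S b (rp S c)) \<and>
     (mul S c a = mul S c b \<longrightarrow> mul S (rs S c) a = mul S (rs S c) b))"

text \<open>A partial action is given as act t y = Some (t . y) or None if undefined.\<close>

definition left_partial_action ::
  "'t set \<Rightarrow> ('t \<Rightarrow> 't \<Rightarrow> 't) \<Rightarrow> 't \<Rightarrow> 'y set \<Rightarrow> ('t \<Rightarrow> 'y \<Rightarrow> 'y option) \<Rightarrow> bool" where
  "left_partial_action T tmul tone Y act \<longleftrightarrow>
     (\<forall>t\<in>T. \<forall>y\<in>Y. \<forall>z. act t y = Some z \<longrightarrow> z \<in> Y) \<and>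
     (\<forall>y\<in>Y. act tone y = Some y) \<and>
     (\<forall>s\<in>T. \<forall>t\<in>T. \<forall>y\<in>Y. \<forall>z w. act t y = Some z \<and> act s z = Some w \<longrightarrow> act (tmul s t) y = Some w)"

definition partially_defined_action ::
  "'t set \<Rightarrow> ('t \<Rightarrow> 't \<Rightarrow> 't) \<Rightarrow> 't \<Rightarrow> 'y set \<Rightarrow> ('t \<Rightarrow> 'y \<Rightarrow> 'y option) \<Rightarrow> bool" where
  "partially_defined_action T tmul tone Y act \<longleftrightarrow> left_partial_action T tmul tone Y act \<and>
     (\<forall>s\<in>T. \<forall>t\<in>T. \<forall>x\<in>Y. act (tmul s t) x \<noteq> None \<longleftrightarrow> (\<exists>z. act t x = Some z \<and> act s z \<noteq> None))"

definition pa_dom :: "'y set \<Rightarrow> ('t \<Rightarrow> 'y \<Rightarrow> 'y option) \<Rightarrow> 't \<Rightarrow> 'y set" where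
  "pa_dom Y act t = {y\<in>Y. act t y \<noteq> None}"

definition pa_ran :: "'y set \<Rightarrow> ('t \<Rightarrow> 'y \<Rightarrow> 'y option) \<Rightarrow> 't \<Rightarrow> 'y set" where
  "pa_ran Y act t = {z. \<exists>y\<in>Y. act t y = Some z}"

definition order_ideal :: "'y set \<Rightarrow> ('y \<Rightarrow> 'y \<Rightarrow> bool) \<Rightarrow> 'y set \<Rightarrow> bool" where
  "order_ideal Y le I \<longleftrightarrow> I \<subseteq> Y \<and> (\<forall>x\<in>Y. \<forall>y\<in>I. le x y \<longrightarrow> x \<in> I)"

definition axiom_A :: "'t set \<Rightarrow> 'y set \<Rightarrow> ('y \<Rightarrow> 'y \<Rightarrow> bool) \<Rightarrow> ('t \<Rightarrow> 'y \<Rightarrow> 'y option) \<Rightarrow> bool" where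
  "axiom_A T Y le act \<longleftrightarrow> (\<forall>t\<in>T. order_ideal Y le (pa_dom Y act t) \<and> order_ideal Y le (pa_ran Y act t))"

definition axiom_B :: "'t set \<Rightarrow> 'y set \<Rightarrow> ('y \<Rightarrow> 'y \<Rightarrow> bool) \<Rightarrow> ('t \<Rightarrow> 'y \<Rightarrow> 'y option) \<Rightarrow> bool" where
  "axiom_B T Y le act \<longleftrightarrow> (\<forall>t\<in>T.
     bij_betw (\<lambda>y. the (act t y)) (pa_dom Y act t) (pa_ran Y act t) \<and>
     (\<forall>x\<in>pa_dom Y act t. \<forall>y\<in>pa_dom Y act t. le x y \<longleftrightarrow> le (the (act t x)) (the (act t y))))"

definition axiom_C :: "'t set \<Rightarrow> 'y set \<Rightarrow> ('t \<Rightarrow> 'y \<Rightarrow> 'y option) \<Rightarrow> bool" where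
  "axiom_C T Y act \<longleftrightarrow> (\<forall>t\<in>T. pa_dom Y act t \<noteq> {})"

definition pa_rev :: "'y set \<Rightarrow> ('t \<Rightarrow> 'y \<Rightarrow> 'y option) \<Rightarrow> 't \<Rightarrow> 'y \<Rightarrow> 'y" where
  "pa_rev Y act t y = (THE x. x \<in> Y \<and> act t x = Some y)"

definition Mmon ::
  "'t set \<Rightarrow> ('t \<Rightarrow> 't \<Rightarrow> 't) \<Rightarrow> 't \<Rightarrow> 'y set \<Rightarrow> ('y \<Rightarrow> 'y \<Rightarrow> 'y) \<Rightarrow> 'y
     \<Rightarrow> ('t \<Rightarrow> 'y \<Rightarrow> 'y option) \<Rightarrow> ('y \<times> 't) rmonoid" where
  "Mmon T tmul tone Y ymeet ytop act =
     \<lparr> car = {(y, t). t \<in> T \<and> y \<in> pa_ran Y act t},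
       mul = (\<lambda>(x, s) (y, t). (the (act s (ymeet (pa_rev Y act s x) y)), tmul s t)),
       rs = (\<lambda>(y, t). (pa_rev Y act t y, tone)),
       rp = (\<lambda>(y, t). (y, tone)),
       idt = (ytop, tone) \<rparr>"

definition qmul :: "('a, 'b) rmonoid_scheme \<Rightarrow> 'a set \<Rightarrow> 'a set \<Rightarrow> 'a set" where
  "qmul S s t = sigma S `` {mul S (SOME a. a \<in> s) (SOME b. b \<in> t)}"

definition uact :: "('a, 'b) rmonoid_scheme \<Rightarrow> 'a set \<Rightarrow> 'a \<Rightarrow> 'a option" where
  "uact S t e = (if e \<in> proj S \<and> (\<exists>a\<in>t. nleq S e (rs S a))
                 then Some (rp S (mul S (SOME a. a \<in> t \<and> nleq S e (rs S a)) e)) else None)"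

definition ultra_F_restriction :: "('a, 'b) rmonoid_scheme \<Rightarrow> bool" where
  "ultra_F_restriction S \<longleftrightarrow> proper S \<and> F_restriction S \<and>
     partially_defined_action (car S // sigma S) (qmul S) (sigma S `` {idt S}) (proj S) (uact S)"

definition rhom :: "('a, 'b) rmonoid_scheme \<Rightarrow> ('c, 'd) rmonoid_scheme \<Rightarrow> ('a \<Rightarrow> 'c) \<Rightarrow> bool" where
  "rhom S1 S2 h \<longleftrightarrow> h ` car S1 \<subseteq> car S2 \<and>
     (\<forall>x\<in>car S1. \<forall>y\<in>car S1. h (mul S1 x y) = mul S2 (h x) (h y)) \<and>
     (\<forall>x\<in>car S1. h (rs S1 x) = rs S2 (h x) \<and> h (rp S1 x) = rp S2 (h x)) \<and>
     h (idt S1) = idt S2"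

definition projection_separating :: "('a, 'b) rmonoid_scheme \<Rightarrow> ('a \<Rightarrow> 'c) \<Rightarrow> bool" where
  "projection_separating S h \<longleftrightarrow> inj_on h (proj S)"

inductive_set gen_by :: "('a, 'b) rmonoid_scheme \<Rightarrow> 'a set \<Rightarrow> 'a set" for S A where
  gen_base: "a \<in> A \<Longrightarrow> a \<in> gen_by S A"
| gen_one: "idt S \<in> gen_by S A"
| gen_mul: "x \<in> gen_by S A \<Longrightarrow> y \<in> gen_by S A \<Longrightarrow> mul S x y \<in> gen_by S A"
| gen_rs: "x \<in> gen_by S A \<Longrightarrow> rs S x \<in> gen_by S A"
| gen_rp: "x \<in> gen_by S A \<Longrightarrow> rp S x \<in> gen_by S A"

text \<open>T = A^*: words over A, product = concatenation, identity = empty word\<close>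
definition words :: "'a set \<Rightarrow> 'a list set" where
  "words A = {v. set v \<subseteq> A}"

definition wval :: "('a, 'b) rmonoid_scheme \<Rightarrow> 'a list \<Rightarrow> 'a" where
  "wval S v = foldr (mul S) v (idt S)"

definition ple :: "('a, 'b) rmonoid_scheme \<Rightarrow> 'a \<Rightarrow> 'a \<Rightarrow> bool" where
  "ple S e f \<longleftrightarrow> e = mul S e f"

definition wact :: "('a, 'b) rmonoid_scheme \<Rightarrow> 'a list \<Rightarrow> 'a \<Rightarrow> 'a option" where
  "wact S v e = (if e \<in> proj S \<and> ple S e (rs S (wval S v))
                 then Some (rp S (mul S (wval S v) e)) else None)"

definition MTE :: "('a, 'b) rmonoid_scheme \<Rightarrow> 'a set \<Rightarrow> ('a \<times> 'a list) rmonoid" where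
  "MTE S A = Mmon (words A) (@) [] (proj S) (mul S) (idt S) (wact S)"

end

theory Submission
  imports Defs
begin

text \<open>
  Every element \<open>a\<close> of a restriction monoid induces an order isomorphism \<open>e \<mapsto> (ae)\<^sup>+\<close>
  from the projections below \<open>a\<^sup>*\<close> onto those below \<open>a\<^sup>+\<close>, with inverse \<open>f \<mapsto> (fa)\<^sup>*\<close>.
  These maps compose like the elements (the domain of \<open>ab\<close> consists of the \<open>e\<close> with
  \<open>e \<le> b\<^sup>*\<close> and \<open>(be)\<^sup>+ \<le> a\<^sup>*\<close>), so they form a partially defined action of \<open>S\<close> on \<open>E\<close>,
  which pulls back to \<open>A\<^sup>*\<close> along the evaluation \<open>v \<mapsto> \<langle>v\<rangle>\<close> of words.
  The map \<open>(e, v) \<mapsto> (e\<langle>v\<rangle>, v)\<close> is a homomorphism from \<open>M(T,E)\<close> into \<open>S \<times> A\<^sup>*\<close>; it is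
  injective because \<open>e = (e\<langle>v\<rangle>)\<^sup>+\<close>, so it transfers the restriction monoid axioms.
  In \<open>M(T,E)\<close> two elements are \<open>\<sigma>\<close>-related iff they carry the same word, each
  \<open>\<sigma>\<close>-class has the maximum \<open>(\<langle>v\<rangle>\<^sup>+, v)\<close>, and the underlying action on the classes is
  the given one. Surjectivity onto \<open>S\<close> is the normal form \<open>e\<langle>v\<rangle>\<close> of the elements of the
  generated algebra.
\<close>

section \<open>Restriction monoids\<close>

locale restr_monoid =
  fixes S :: "('a, 'b) rmonoid_scheme"
  assumes restriction_monoid: "restriction_monoid S"
begin

abbreviation times_S (infixl "\<cdot>" 70) where "x \<cdot> y \<equiv> mul S x y"
abbreviation star_S ("_\<^sup>\<star>" [1000] 999) where "x\<^sup>\<star> \<equiv> rs S x"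
abbreviation plus_S ("_\<^sup>\<oplus>" [1000] 999) where "x\<^sup>\<oplus> \<equiv> rp S x"
abbreviation le_S (infix "\<preceq>" 50) where "e \<preceq> f \<equiv> ple S e f"
abbreviation one_S ("\<one>") where "\<one> \<equiv> idt S"
abbreviation E where "E \<equiv> proj S"

lemma restriction_semigroup: "restriction_semigroup S"
  using restriction_monoid by (simp add: restriction_monoid_def)

lemma mul_closed [simp]: "x \<in> car S \<Longrightarrow> y \<in> car S \<Longrightarrow> x \<cdot> y \<in> car S"
  and rs_closed [simp]: "x \<in> car S \<Longrightarrow> x\<^sup>\<star> \<in> car S"
  and rp_closed [simp]: "x \<in> car S \<Longrightarrow> x\<^sup>\<oplus> \<in> car S"
  and mul_assoc: "x \<in> car S \<Longrightarrow> y \<in> car S \<Longrightarrow> z \<in> car S \<Longrightarrow> x \<cdot> y \<cdot> z = x \<cdot> (y \<cdot> z)"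
  using restriction_semigroup unfolding restriction_semigroup_def by blast+

lemma idt_closed [simp]: "\<one> \<in> car S"
  and idt_left [simp]: "x \<in> car S \<Longrightarrow> \<one> \<cdot> x = x"
  and idt_right [simp]: "x \<in> car S \<Longrightarrow> x \<cdot> \<one> = x"
  using restriction_monoid by (simp_all add: restriction_monoid_def)

lemma
  assumes "x \<in> car S"
  shows mul_rs_self [simp]: "x \<cdot> x\<^sup>\<star> = x"
    and rp_mul_self [simp]: "x\<^sup>\<oplus> \<cdot> x = x"
    and rs_rp [simp]: "(x\<^sup>\<oplus>)\<^sup>\<star> = x\<^sup>\<oplus>"
    and rp_rs [simp]: "(x\<^sup>\<star>)\<^sup>\<oplus> = x\<^sup>\<star>"
  using restriction_semigroup assms idt_closed unfolding restriction_semigroup_def by blast+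

lemma
  assumes "x \<in> car S" "y \<in> car S"
  shows rs_commute: "x\<^sup>\<star> \<cdot> y\<^sup>\<star> = y\<^sup>\<star> \<cdot> x\<^sup>\<star>"
    and rs_mul_rs: "(x \<cdot> y\<^sup>\<star>)\<^sup>\<star> = x\<^sup>\<star> \<cdot> y\<^sup>\<star>"
    and rs_mul_left: "x\<^sup>\<star> \<cdot> y = y \<cdot> (x \<cdot> y)\<^sup>\<star>"
    and rp_commute: "x\<^sup>\<oplus> \<cdot> y\<^sup>\<oplus> = y\<^sup>\<oplus> \<cdot> x\<^sup>\<oplus>"
    and rp_rp_mul: "(x\<^sup>\<oplus> \<cdot> y)\<^sup>\<oplus> = x\<^sup>\<oplus> \<cdot> y\<^sup>\<oplus>"
    and mul_rp_right: "x \<cdot> y\<^sup>\<oplus> = (x \<cdot> y)\<^sup>\<oplus> \<cdot> x"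
  using restriction_semigroup assms unfolding restriction_semigroup_def by blast+

lemma rs_in_proj [simp]: "x \<in> car S \<Longrightarrow> x\<^sup>\<star> \<in> E"
  by (simp add: proj_def)

lemma rp_in_proj [simp]: "x \<in> car S \<Longrightarrow> x\<^sup>\<oplus> \<in> E"
  using rs_in_proj[of "x\<^sup>\<oplus>"] by simp

lemma projE:
  assumes "e \<in> E" obtains x where "x \<in> car S" "e = x\<^sup>\<star>"
  using assms unfolding proj_def by blast

lemma proj_closed [simp]: "e \<in> E \<Longrightarrow> e \<in> car S"
  by (erule projE) simp

lemma rs_proj [simp]: "e \<in> E \<Longrightarrow> e\<^sup>\<star> = e"
  by (metis projE rp_rs rs_closed rs_rp)

lemma rp_proj [simp]: "e \<in> E \<Longrightarrow> e\<^sup>\<oplus> = e"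
  by (erule projE) simp

lemma proj_idem [simp]: "e \<in> E \<Longrightarrow> e \<cdot> e = e"
  using mul_rs_self[of e] by simp

lemma proj_commute: "e \<in> E \<Longrightarrow> f \<in> E \<Longrightarrow> e \<cdot> f = f \<cdot> e"
  using rs_commute[of e f] by simp

lemma proj_mul_closed [simp]: "e \<in> E \<Longrightarrow> f \<in> E \<Longrightarrow> e \<cdot> f \<in> E"
  using rs_mul_rs[of e f] rs_in_proj[of "e \<cdot> f"] by simp

lemma idt_in_proj [simp]: "\<one> \<in> E"
  by (metis idt_closed idt_left mul_rs_self rs_closed rs_in_proj)

lemma rs_mul_proj: "a \<in> car S \<Longrightarrow> e \<in> E \<Longrightarrow> (a \<cdot> e)\<^sup>\<star> = a\<^sup>\<star> \<cdot> e"
  using rs_mul_rs[of a e] by simp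

lemma mul_proj_right: "a \<in> car S \<Longrightarrow> e \<in> E \<Longrightarrow> a \<cdot> e = (a \<cdot> e)\<^sup>\<oplus> \<cdot> a"
  using mul_rp_right[of a e] by simp

lemma mul_proj_left: "a \<in> car S \<Longrightarrow> e \<in> E \<Longrightarrow> e \<cdot> a = a \<cdot> (e \<cdot> a)\<^sup>\<star>"
  using rs_mul_left[of e a] by simp

lemma rp_proj_mul: "a \<in> car S \<Longrightarrow> e \<in> E \<Longrightarrow> (e \<cdot> a)\<^sup>\<oplus> = e \<cdot> a\<^sup>\<oplus>"
  using rp_rp_mul[of e a] by simp

lemma ple_trans: "e \<preceq> f \<Longrightarrow> f \<preceq> g \<Longrightarrow> e \<in> car S \<Longrightarrow> f \<in> car S \<Longrightarrow> g \<in> car S \<Longrightarrow> e \<preceq> g"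
  unfolding ple_def by (metis mul_assoc)

lemma ple_refl: "e \<in> E \<Longrightarrow> e \<preceq> e"
  by (simp add: ple_def)

lemma ple_idt: "e \<in> E \<Longrightarrow> e \<preceq> \<one>"
  by (simp add: ple_def)

lemma ple_iff_left: "e \<in> E \<Longrightarrow> f \<in> E \<Longrightarrow> e \<preceq> f \<longleftrightarrow> e = f \<cdot> e"
  by (simp add: ple_def proj_commute)

lemma ple_meet_left: "e \<in> E \<Longrightarrow> f \<in> E \<Longrightarrow> e \<cdot> f \<preceq> e"
  by (simp add: ple_iff_left mul_assoc[symmetric])

lemma ple_meet_right: "e \<in> E \<Longrightarrow> f \<in> E \<Longrightarrow> e \<cdot> f \<preceq> f"
  by (simp add: ple_def mul_assoc)

lemma rp_mul_le: "a \<in> car S \<Longrightarrow> b \<in> car S \<Longrightarrow> (a \<cdot> b)\<^sup>\<oplus> \<preceq> a\<^sup>\<oplus>"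
proof -
  assume ab: "a \<in> car S" "b \<in> car S"
  have "(a \<cdot> b)\<^sup>\<oplus> = (a\<^sup>\<oplus> \<cdot> (a \<cdot> b))\<^sup>\<oplus>"
    using ab by (simp add: mul_assoc[symmetric])
  also have "\<dots> = a\<^sup>\<oplus> \<cdot> (a \<cdot> b)\<^sup>\<oplus>"
    using ab by (simp add: rp_rp_mul)
  finally show ?thesis
    using ab by (simp add: ple_iff_left)
qed

lemma rs_mul_le: "a \<in> car S \<Longrightarrow> b \<in> car S \<Longrightarrow> (a \<cdot> b)\<^sup>\<star> \<preceq> b\<^sup>\<star>"
proof -
  assume ab: "a \<in> car S" "b \<in> car S"
  have "(a \<cdot> b)\<^sup>\<star> = (a \<cdot> b \<cdot> b\<^sup>\<star>)\<^sup>\<star>"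
    using ab by (simp add: mul_assoc)
  also have "\<dots> = (a \<cdot> b)\<^sup>\<star> \<cdot> b\<^sup>\<star>"
    using ab by (simp add: rs_mul_rs)
  finally show ?thesis
    by (simp add: ple_def)
qed

lemma rp_mul_rp: "a \<in> car S \<Longrightarrow> c \<in> car S \<Longrightarrow> (a \<cdot> c\<^sup>\<oplus>)\<^sup>\<oplus> = (a \<cdot> c)\<^sup>\<oplus>"
proof -
  assume ac: "a \<in> car S" "c \<in> car S"
  have "(a \<cdot> c\<^sup>\<oplus>)\<^sup>\<oplus> = ((a \<cdot> c)\<^sup>\<oplus> \<cdot> a)\<^sup>\<oplus>"
    using ac by (simp add: mul_rp_right)
  also have "\<dots> = (a \<cdot> c)\<^sup>\<oplus> \<cdot> a\<^sup>\<oplus>"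
    using ac by (simp add: rp_rp_mul)
  also have "\<dots> = (a \<cdot> c)\<^sup>\<oplus>"
    using rp_mul_le[OF ac] by (simp add: ple_def)
  finally show ?thesis .
qed

lemma rs_rp_mul_cancel:
  assumes "a \<in> car S" "e \<in> E" "e \<preceq> a\<^sup>\<star>"
  shows "((a \<cdot> e)\<^sup>\<oplus> \<cdot> a)\<^sup>\<star> = e"
proof -
  have "((a \<cdot> e)\<^sup>\<oplus> \<cdot> a)\<^sup>\<star> = a\<^sup>\<star> \<cdot> e"
    using assms(1,2) by (simp add: mul_proj_right[symmetric] rs_mul_proj)
  also have "\<dots> = e"
    using assms by (simp add: ple_iff_left)
  finally show ?thesis .
qed

lemma rp_mul_rs_cancel:
  assumes "a \<in> car S" "f \<in> E" "f \<preceq> a\<^sup>\<oplus>"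
  shows "(a \<cdot> (f \<cdot> a)\<^sup>\<star>)\<^sup>\<oplus> = f"
proof -
  have "(a \<cdot> (f \<cdot> a)\<^sup>\<star>)\<^sup>\<oplus> = f \<cdot> a\<^sup>\<oplus>"
    using assms(1,2) by (simp add: mul_proj_left[symmetric] rp_proj_mul)
  also have "\<dots> = f"
    using assms(3) by (simp add: ple_def)
  finally show ?thesis .
qed

lemma le_rs_mul_iff:
  assumes a: "a \<in> car S" and b: "b \<in> car S" and e: "e \<in> E"
  shows "e \<preceq> (a \<cdot> b)\<^sup>\<star> \<longleftrightarrow> e \<preceq> b\<^sup>\<star> \<and> (b \<cdot> e)\<^sup>\<oplus> \<preceq> a\<^sup>\<star>"
proof -
  have swap: "b \<cdot> ((a \<cdot> b)\<^sup>\<star> \<cdot> e) = a\<^sup>\<star> \<cdot> (b \<cdot> e)"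
  proof -
    have "b \<cdot> ((a \<cdot> b)\<^sup>\<star> \<cdot> e) = b \<cdot> (a \<cdot> b)\<^sup>\<star> \<cdot> e"
      using a b e by (simp add: mul_assoc)
    also have "\<dots> = a\<^sup>\<star> \<cdot> b \<cdot> e"
      using a b by (simp add: rs_mul_left)
    finally show ?thesis
      using a b e by (simp add: mul_assoc)
  qed
  have le_b: "(a \<cdot> b)\<^sup>\<star> \<preceq> b\<^sup>\<star>"
    using a b by (rule rs_mul_le)
  show ?thesis
  proof
    assume le: "e \<preceq> (a \<cdot> b)\<^sup>\<star>"
    have "b \<cdot> e = a\<^sup>\<star> \<cdot> (b \<cdot> e)"
      using le a b e swap by (simp add: ple_iff_left)
    then have "(b \<cdot> e)\<^sup>\<oplus> = a\<^sup>\<star> \<cdot> (b \<cdot> e)\<^sup>\<oplus>"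
      using a b e by (metis mul_closed proj_closed rp_proj_mul rs_in_proj)
    then have "(b \<cdot> e)\<^sup>\<oplus> \<preceq> a\<^sup>\<star>"
      using a b e by (simp add: ple_iff_left)
    moreover have "e \<preceq> b\<^sup>\<star>"
      using ple_trans[OF le le_b] a b e by simp
    ultimately show "e \<preceq> b\<^sup>\<star> \<and> (b \<cdot> e)\<^sup>\<oplus> \<preceq> a\<^sup>\<star>" by blast
  next
    assume "e \<preceq> b\<^sup>\<star> \<and> (b \<cdot> e)\<^sup>\<oplus> \<preceq> a\<^sup>\<star>"
    then have le_e: "e \<preceq> b\<^sup>\<star>" and le_be: "(b \<cdot> e)\<^sup>\<oplus> = a\<^sup>\<star> \<cdot> (b \<cdot> e)\<^sup>\<oplus>"
      using a b e by (auto simp: ple_iff_left)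
    have "b \<cdot> e = a\<^sup>\<star> \<cdot> (b \<cdot> e)\<^sup>\<oplus> \<cdot> (b \<cdot> e)"
      using le_be a b e by simp
    also have "\<dots> = b \<cdot> ((a \<cdot> b)\<^sup>\<star> \<cdot> e)"
      using a b e swap by (simp add: mul_assoc)
    finally have be: "b \<cdot> e = b \<cdot> ((a \<cdot> b)\<^sup>\<star> \<cdot> e)" .
    have "e = (b \<cdot> e)\<^sup>\<star>"
      using le_e b e by (simp add: rs_mul_proj ple_iff_left)
    also have "\<dots> = (b \<cdot> ((a \<cdot> b)\<^sup>\<star> \<cdot> e))\<^sup>\<star>"
      by (simp only: be)
    also have "\<dots> = (a \<cdot> b)\<^sup>\<star> \<cdot> e"
      using le_b a b e by (simp add: rs_mul_proj mul_assoc[symmetric] ple_iff_left)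
    finally show "e \<preceq> (a \<cdot> b)\<^sup>\<star>"
      using a b e by (simp add: ple_iff_left)
  qed
qed

lemma rp_proj_mul_proj_mul:
  assumes "x \<in> E" "a \<in> car S" "y \<in> E"
  shows "(x \<cdot> a \<cdot> y)\<^sup>\<oplus> \<cdot> a = x \<cdot> a \<cdot> y"
proof -
  have "(x \<cdot> a \<cdot> y)\<^sup>\<oplus> \<cdot> a = x \<cdot> ((a \<cdot> y)\<^sup>\<oplus> \<cdot> a)"
    using assms by (simp add: mul_assoc rp_proj_mul)
  also have "\<dots> = x \<cdot> a \<cdot> y"
    using assms by (simp add: mul_proj_right[symmetric] mul_assoc)
  finally show ?thesis .
qed

lemma rp_proj_mul_proj_le:
  assumes x: "x \<in> E" and a: "a \<in> car S" and b: "b \<in> car S" and y: "y \<in> E" "y \<preceq> b\<^sup>\<oplus>"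
  shows "(x \<cdot> a \<cdot> y)\<^sup>\<oplus> \<preceq> (a \<cdot> b)\<^sup>\<oplus>"
proof -
  have "(x \<cdot> a \<cdot> y)\<^sup>\<oplus> = x \<cdot> (a \<cdot> y)\<^sup>\<oplus>"
    using x a y by (simp add: mul_assoc rp_proj_mul)
  then have "(x \<cdot> a \<cdot> y)\<^sup>\<oplus> \<preceq> (a \<cdot> y)\<^sup>\<oplus>"
    using x a y by (simp add: ple_meet_right)
  moreover have "a \<cdot> y = a \<cdot> b\<^sup>\<oplus> \<cdot> y"
    using a b y by (simp add: ple_iff_left mul_assoc)
  then have "(a \<cdot> y)\<^sup>\<oplus> \<preceq> (a \<cdot> b)\<^sup>\<oplus>"
    using rp_mul_le[of "a \<cdot> b\<^sup>\<oplus>" y] a b y by (simp add: rp_mul_rp)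
  ultimately show ?thesis
    using ple_trans x a b y by simp
qed

lemma rs_rp_mul_proj_mul:
  assumes z: "z \<in> E" and a: "a \<in> car S" and w: "w \<in> E"
  shows "((z \<cdot> a \<cdot> w)\<^sup>\<oplus> \<cdot> a)\<^sup>\<star> = (z \<cdot> a)\<^sup>\<star> \<cdot> w"
proof -
  have "z \<cdot> a \<cdot> w = a \<cdot> ((z \<cdot> a)\<^sup>\<star> \<cdot> w)"
    using z a w by (simp add: mul_proj_left[symmetric] mul_assoc[symmetric])
  moreover have "(z \<cdot> a)\<^sup>\<star> \<cdot> w \<preceq> a\<^sup>\<star>"
    using ple_trans[OF ple_meet_left rs_mul_le[of z a]] z a w by simp
  ultimately show ?thesis
    using rs_rp_mul_cancel[of a "(z \<cdot> a)\<^sup>\<star> \<cdot> w"] z a w by simp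
qed

lemma proj_mul_absorb:
  assumes x: "x \<in> E" and a: "a \<in> car S" and e: "e \<in> E" "e \<preceq> (x \<cdot> a)\<^sup>\<star>"
  shows "x \<cdot> a \<cdot> e = a \<cdot> e"
proof -
  have "x \<cdot> a \<cdot> e = a \<cdot> ((x \<cdot> a)\<^sup>\<star> \<cdot> e)"
    using x a e by (simp add: mul_proj_left[symmetric] mul_assoc[symmetric])
  also have "(x \<cdot> a)\<^sup>\<star> \<cdot> e = e"
    using x a e by (simp add: ple_iff_left)
  finally show ?thesis .
qed

end

section \<open>The action of a restriction monoid on its projections\<close>

context restr_monoid
begin

definition elem_act :: "'a \<Rightarrow> 'a \<Rightarrow> 'a option" where
  "elem_act a e = (if e \<in> E \<and> e \<preceq> a\<^sup>\<star> then Some ((a \<cdot> e)\<^sup>\<oplus>) else None)"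

lemma elem_act_eq_Some: "elem_act a e = Some f \<longleftrightarrow> e \<in> E \<and> e \<preceq> a\<^sup>\<star> \<and> f = (a \<cdot> e)\<^sup>\<oplus>"
  by (auto simp: elem_act_def)

lemma rp_mul_proj_mono:
  assumes "a \<in> car S" "e \<in> E" "e' \<in> E" "e \<preceq> e'"
  shows "(a \<cdot> e)\<^sup>\<oplus> \<preceq> (a \<cdot> e')\<^sup>\<oplus>"
proof -
  have "a \<cdot> e = a \<cdot> e' \<cdot> e"
    using assms by (simp add: ple_iff_left mul_assoc)
  then show ?thesis
    using rp_mul_le[of "a \<cdot> e'" e] assms by simp
qed

lemma rs_proj_mul_mono:
  assumes "a \<in> car S" "f \<in> E" "f' \<in> E" "f \<preceq> f'"
  shows "(f \<cdot> a)\<^sup>\<star> \<preceq> (f' \<cdot> a)\<^sup>\<star>"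
proof -
  have "f \<cdot> a = f \<cdot> (f' \<cdot> a)"
    using assms by (metis ple_def mul_assoc proj_closed)
  then show ?thesis
    using rs_mul_le[of f "f' \<cdot> a"] assms by simp
qed

lemma dom_elem_act: "pa_dom E elem_act a = {e \<in> E. e \<preceq> a\<^sup>\<star>}"
  by (auto simp: pa_dom_def elem_act_def)

lemma ran_elem_act:
  assumes a: "a \<in> car S"
  shows "pa_ran E elem_act a = {f \<in> E. f \<preceq> a\<^sup>\<oplus>}"
proof (intro set_eqI iffI)
  fix f assume "f \<in> pa_ran E elem_act a"
  then show "f \<in> {f \<in> E. f \<preceq> a\<^sup>\<oplus>}"
    using a rp_mul_le[of a] by (auto simp: pa_ran_def elem_act_eq_Some)
next
  fix f assume "f \<in> {f \<in> E. f \<preceq> a\<^sup>\<oplus>}"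
  then have "elem_act a ((f \<cdot> a)\<^sup>\<star>) = Some f"
    using a rs_mul_le[of f a] rp_mul_rs_cancel[of a f] by (simp add: elem_act_def)
  then show "f \<in> pa_ran E elem_act a"
    using a \<open>f \<in> {f \<in> E. f \<preceq> a\<^sup>\<oplus>}\<close> by (auto simp: pa_ran_def)
qed

lemma rev_elem_act:
  assumes "a \<in> car S" "f \<in> E" "f \<preceq> a\<^sup>\<oplus>"
  shows "pa_rev E elem_act a f = (f \<cdot> a)\<^sup>\<star>"
  unfolding pa_rev_def
proof (rule the_equality)
  show "(f \<cdot> a)\<^sup>\<star> \<in> E \<and> elem_act a ((f \<cdot> a)\<^sup>\<star>) = Some f"
    using assms rs_mul_le[of f a] rp_mul_rs_cancel[of a f] by (simp add: elem_act_def)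
next
  fix e assume "e \<in> E \<and> elem_act a e = Some f"
  then show "e = (f \<cdot> a)\<^sup>\<star>"
    using assms(1) rs_rp_mul_cancel[of a e] by (auto simp: elem_act_eq_Some)
qed

lemma elem_act_partially_defined_action:
  "partially_defined_action (car S) (mul S) \<one> E elem_act"
  unfolding partially_defined_action_def left_partial_action_def
proof (intro conjI ballI allI impI)
  fix t y z assume "t \<in> car S" "elem_act t y = Some z"
  then show "z \<in> E"
    by (auto simp: elem_act_eq_Some)
next
  fix y assume "y \<in> E"
  then show "elem_act \<one> y = Some y"
    by (simp add: elem_act_def ple_idt)
next
  fix a b e f g
  assume ab: "a \<in> car S" "b \<in> car S" and "elem_act b e = Some f \<and> elem_act a f = Some g"
  then have e: "e \<in> E" "e \<preceq> b\<^sup>\<star>" and f: "f = (b \<cdot> e)\<^sup>\<oplus>" "f \<preceq> a\<^sup>\<star>" and g: "g = (a \<cdot> f)\<^sup>\<oplus>"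
    by (auto simp: elem_act_eq_Some)
  have "e \<preceq> (a \<cdot> b)\<^sup>\<star>"
    using le_rs_mul_iff[OF ab e(1)] e f by simp
  moreover have "(a \<cdot> b \<cdot> e)\<^sup>\<oplus> = g"
    using ab e f g rp_mul_rp[of a "b \<cdot> e"] by (simp add: mul_assoc)
  ultimately show "elem_act (a \<cdot> b) e = Some g"
    using e by (simp add: elem_act_def)
next
  fix a b e assume "a \<in> car S" "b \<in> car S" "e \<in> E"
  then show "elem_act (a \<cdot> b) e \<noteq> None \<longleftrightarrow> (\<exists>f. elem_act b e = Some f \<and> elem_act a f \<noteq> None)"
    using le_rs_mul_iff[of a b e] by (simp add: elem_act_def)
qed

lemma elem_act_axiom_A: "axiom_A (car S) E (ple S) elem_act"
  unfolding axiom_A_def order_ideal_def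
  using ple_trans by (auto simp: dom_elem_act ran_elem_act)

lemma elem_act_axiom_B: "axiom_B (car S) E (ple S) elem_act"
  unfolding axiom_B_def
proof (rule ballI, rule conjI)
  fix a assume a: "a \<in> car S"
  show "bij_betw (\<lambda>e. the (elem_act a e)) (pa_dom E elem_act a) (pa_ran E elem_act a)"
  proof (rule bij_betw_byWitness[where f' = "\<lambda>f. (f \<cdot> a)\<^sup>\<star>"])
    show "\<forall>e\<in>pa_dom E elem_act a. (the (elem_act a e) \<cdot> a)\<^sup>\<star> = e"
      using a rs_rp_mul_cancel[of a] by (simp add: dom_elem_act elem_act_def)
    show "\<forall>f\<in>pa_ran E elem_act a. the (elem_act a ((f \<cdot> a)\<^sup>\<star>)) = f"
      using a rs_mul_le[of _ a] rp_mul_rs_cancel[of a] by (simp add: ran_elem_act elem_act_def)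
    show "(\<lambda>e. the (elem_act a e)) ` pa_dom E elem_act a \<subseteq> pa_ran E elem_act a"
      using a rp_mul_le[of a] by (auto simp: dom_elem_act ran_elem_act elem_act_def)
    show "(\<lambda>f. (f \<cdot> a)\<^sup>\<star>) ` pa_ran E elem_act a \<subseteq> pa_dom E elem_act a"
      using a rs_mul_le[of _ a] by (auto simp: dom_elem_act ran_elem_act)
  qed
  show "\<forall>e\<in>pa_dom E elem_act a. \<forall>e'\<in>pa_dom E elem_act a.
          e \<preceq> e' \<longleftrightarrow> the (elem_act a e) \<preceq> the (elem_act a e')"
  proof (intro ballI iffI)
    fix e e' assume "e \<in> pa_dom E elem_act a" "e' \<in> pa_dom E elem_act a"
    then have e: "e \<in> E" "e \<preceq> a\<^sup>\<star>" and e': "e' \<in> E" "e' \<preceq> a\<^sup>\<star>"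
      by (auto simp: dom_elem_act)
    show "the (elem_act a e) \<preceq> the (elem_act a e')" if "e \<preceq> e'"
      using rp_mul_proj_mono[OF a e(1) e'(1) that] e e' by (simp add: elem_act_def)
    show "e \<preceq> e'" if "the (elem_act a e) \<preceq> the (elem_act a e')"
      using rs_proj_mul_mono[of a "(a \<cdot> e)\<^sup>\<oplus>" "(a \<cdot> e')\<^sup>\<oplus>"] that a e e'
      by (simp add: elem_act_def rs_rp_mul_cancel)
  qed
qed

lemma elem_act_axiom_C: "axiom_C (car S) E elem_act"
  unfolding axiom_C_def dom_elem_act using ple_refl rs_in_proj by blast

end

section \<open>Pulling back partial actions\<close>

lemma pa_dom_comp [simp]: "pa_dom Y (act \<circ> h) t = pa_dom Y act (h t)"
  by (simp add: pa_dom_def)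

lemma pa_ran_comp [simp]: "pa_ran Y (act \<circ> h) t = pa_ran Y act (h t)"
  by (simp add: pa_ran_def)

lemma pa_rev_comp [simp]: "pa_rev Y (act \<circ> h) t = pa_rev Y act (h t)"
  by (simp add: pa_rev_def fun_eq_iff)

lemma axiom_A_comp: "axiom_A T Y le act \<Longrightarrow> h ` T' \<subseteq> T \<Longrightarrow> axiom_A T' Y le (act \<circ> h)"
  unfolding axiom_A_def by auto

lemma axiom_B_comp: "axiom_B T Y le act \<Longrightarrow> h ` T' \<subseteq> T \<Longrightarrow> axiom_B T' Y le (act \<circ> h)"
  unfolding axiom_B_def by auto

lemma axiom_C_comp: "axiom_C T Y act \<Longrightarrow> h ` T' \<subseteq> T \<Longrightarrow> axiom_C T' Y (act \<circ> h)"
  unfolding axiom_C_def by auto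

context
  fixes T' :: "'t set" and tmul' tone' and h :: "'t \<Rightarrow> 's" and j :: "'y \<Rightarrow> 'z" and act'
    and T tmul tone Y act
  assumes closed: "\<And>s t. s \<in> T' \<Longrightarrow> t \<in> T' \<Longrightarrow> tmul' s t \<in> T'" "tone' \<in> T'"
    and hom: "h ` T' \<subseteq> T" "\<And>s t. s \<in> T' \<Longrightarrow> t \<in> T' \<Longrightarrow> h (tmul' s t) = tmul (h s) (h t)"
      "h tone' = tone"
    and act': "\<And>t y. t \<in> T' \<Longrightarrow> y \<in> Y \<Longrightarrow> act' t (j y) = map_option j (act (h t) y)"
begin

lemma pullback_eq_Some:
  "t \<in> T' \<Longrightarrow> y \<in> Y \<Longrightarrow> act' t (j y) = Some z' \<longleftrightarrow> (\<exists>z. act (h t) y = Some z \<and> z' = j z)"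
  using act' by auto

lemma left_partial_action_pullback:
  assumes "left_partial_action T tmul tone Y act"
  shows "left_partial_action T' tmul' tone' (j ` Y) act'"
proof -
  have closed_Y: "\<And>t y z. t \<in> T \<Longrightarrow> y \<in> Y \<Longrightarrow> act t y = Some z \<Longrightarrow> z \<in> Y"
    and unit: "\<And>y. y \<in> Y \<Longrightarrow> act tone y = Some y"
    and comp: "\<And>s t y z w. s \<in> T \<Longrightarrow> t \<in> T \<Longrightarrow> y \<in> Y \<Longrightarrow> act t y = Some z \<Longrightarrow>
                 act s z = Some w \<Longrightarrow> act (tmul s t) y = Some w"
    using assms unfolding left_partial_action_def by blast+
  show ?thesis
    unfolding left_partial_action_def
  proof (intro conjI ballI allI impI)
    fix t y' z' assume "t \<in> T'" "y' \<in> j ` Y" "act' t y' = Some z'"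
    then show "z' \<in> j ` Y"
      using pullback_eq_Some closed_Y hom(1) by blast
  next
    fix y' assume "y' \<in> j ` Y"
    then show "act' tone' y' = Some y'"
      using act' closed(2) hom(3) unit by auto
  next
    fix s t y' z' w'
    assume st: "s \<in> T'" "t \<in> T'" and "y' \<in> j ` Y" and steps: "act' t y' = Some z' \<and> act' s z' = Some w'"
    then obtain y where y: "y \<in> Y" "y' = j y"
      by blast
    have hst: "h s \<in> T" "h t \<in> T"
      using st hom(1) by auto
    obtain z where z: "act (h t) y = Some z" "z' = j z"
      using steps pullback_eq_Some[OF st(2) y(1)] y(2) by blast
    have "z \<in> Y"
      using closed_Y[OF hst(2) y(1) z(1)] .
    then obtain w where "act (h s) z = Some w" "w' = j w"
      using steps pullback_eq_Some[OF st(1)] z(2) by blast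
    then show "act' (tmul' s t) y' = Some w'"
      using comp[OF hst y(1) z(1)] act'[of "tmul' s t" y] st y closed hom by simp
  qed
qed

lemma partially_defined_action_pullback:
  assumes pda: "partially_defined_action T tmul tone Y act"
  shows "partially_defined_action T' tmul' tone' (j ` Y) act'"
  unfolding partially_defined_action_def
proof (intro conjI ballI)
  show "left_partial_action T' tmul' tone' (j ` Y) act'"
    using pda left_partial_action_pullback unfolding partially_defined_action_def by blast
  fix s t y' assume st: "s \<in> T'" "t \<in> T'" and "y' \<in> j ` Y"
  then obtain y where y: "y \<in> Y" "y' = j y"
    by blast
  have hst: "h s \<in> T" "h t \<in> T"
    using st hom(1) by auto
  have closed_Y: "act (h t) y = Some z \<Longrightarrow> z \<in> Y" for z
    using pda hst(2) y(1) unfolding partially_defined_action_def left_partial_action_def by blast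
  have defined_s: "act (h s) z \<noteq> None \<longleftrightarrow> act' s (j z) \<noteq> None" if "act (h t) y = Some z" for z
    using act'[OF st(1) closed_Y[OF that]] by simp
  have "act' (tmul' s t) y' \<noteq> None \<longleftrightarrow> act (tmul (h s) (h t)) y \<noteq> None"
    using act'[of "tmul' s t" y] st y closed hom by simp
  also have "\<dots> \<longleftrightarrow> (\<exists>z. act (h t) y = Some z \<and> act (h s) z \<noteq> None)"
    using pda hst y(1) unfolding partially_defined_action_def by blast
  also have "\<dots> \<longleftrightarrow> (\<exists>z'. act' t y' = Some z' \<and> act' s z' \<noteq> None)"
    unfolding y(2) using pullback_eq_Some[OF st(2) y(1)] defined_s by metis
  finally show "act' (tmul' s t) y' \<noteq> None \<longleftrightarrow> (\<exists>z'. act' t y' = Some z' \<and> act' s z' \<noteq> None)" .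
qed

end

section \<open>Embeddings into restriction monoids\<close>

lemma rhom_comp: "rhom M N f \<Longrightarrow> rhom N Q g \<Longrightarrow> rhom M Q (g \<circ> f)"
  unfolding rhom_def by (auto simp: image_subset_iff)

lemma restriction_monoid_embedding:
  assumes Q: "restriction_monoid Q" and g: "rhom M Q g" "inj_on g (car M)"
    and closed: "\<And>x y. x \<in> car M \<Longrightarrow> y \<in> car M \<Longrightarrow> mul M x y \<in> car M"
      "\<And>x. x \<in> car M \<Longrightarrow> rs M x \<in> car M" "\<And>x. x \<in> car M \<Longrightarrow> rp M x \<in> car M"
      "idt M \<in> car M"
  shows "restriction_monoid M"
proof -
  interpret Q: restr_monoid Q
    by (rule restr_monoid.intro[OF Q])
  have g_closed: "\<And>x. x \<in> car M \<Longrightarrow> g x \<in> car Q"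
    using g(1) unfolding rhom_def by blast
  have g_hom: "\<And>x y. x \<in> car M \<Longrightarrow> y \<in> car M \<Longrightarrow> g (mul M x y) = mul Q (g x) (g y)"
    "\<And>x. x \<in> car M \<Longrightarrow> g (rs M x) = rs Q (g x)" "\<And>x. x \<in> car M \<Longrightarrow> g (rp M x) = rp Q (g x)"
    "g (idt M) = idt Q"
    using g(1) unfolding rhom_def by blast+
  have reflect: "u = v" if "u \<in> car M" "v \<in> car M" "g u = g v" for u v
    using g(2) that by (simp add: inj_on_def)
  note simps = closed g_closed g_hom
  show ?thesis
    unfolding restriction_monoid_def restriction_semigroup_def
  proof (intro conjI ballI)
    fix x y z assume "x \<in> car M" "y \<in> car M" "z \<in> car M"
    then show "mul M (mul M x y) z = mul M x (mul M y z)"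
      by (intro reflect) (simp_all add: simps Q.mul_assoc)
  next
    fix x y assume xy: "x \<in> car M" "y \<in> car M"
    show "mul M x (rs M x) = x" "mul M (rp M x) x = x"
      "rs M (rp M x) = rp M x" "rp M (rs M x) = rs M x"
      using xy by (intro reflect; simp add: simps)+
    show "mul M (rs M x) (rs M y) = mul M (rs M y) (rs M x)"
      using xy by (intro reflect) (simp_all add: simps Q.rs_commute)
    show "rs M (mul M x (rs M y)) = mul M (rs M x) (rs M y)"
      using xy by (intro reflect) (simp_all add: simps Q.rs_mul_rs)
    show "mul M (rs M x) y = mul M y (rs M (mul M x y))"
      using xy by (intro reflect) (simp_all add: simps Q.rs_mul_left)
    show "mul M (rp M x) (rp M y) = mul M (rp M y) (rp M x)"
      using xy by (intro reflect) (simp_all add: simps Q.rp_commute)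
    show "rp M (mul M (rp M x) y) = mul M (rp M x) (rp M y)"
      using xy by (intro reflect) (simp_all add: simps Q.rp_rp_mul)
    show "mul M x (rp M y) = mul M (rp M (mul M x y)) x"
      using xy by (intro reflect) (simp_all add: simps Q.mul_rp_right)
  next
    fix x assume "x \<in> car M"
    then show "mul M (idt M) x = x" "mul M x (idt M) = x"
      by (intro reflect; simp add: simps)+
  qed (simp_all add: closed)
qed

definition times_monoid :: "('a, 'b) rmonoid_scheme \<Rightarrow> ('t \<Rightarrow> 't \<Rightarrow> 't) \<Rightarrow> 't \<Rightarrow> ('a \<times> 't) rmonoid" where
  "times_monoid S tmul tone =
     \<lparr>car = car S \<times> UNIV, mul = (\<lambda>(a, s) (b, t). (mul S a b, tmul s t)),
      rs = (\<lambda>(a, s). (rs S a, tone)), rp = (\<lambda>(a, s). (rp S a, tone)), idt = (idt S, tone)\<rparr>"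

lemma restriction_monoid_times_monoid:
  assumes S: "restriction_monoid S"
    and T: "\<And>r s t. tmul (tmul r s) t = tmul r (tmul s t)" "\<And>t. tmul tone t = t" "\<And>t. tmul t tone = t"
  shows "restriction_monoid (times_monoid S tmul tone)"
proof -
  interpret S: restr_monoid S
    by (rule restr_monoid.intro[OF S])
  show ?thesis
    unfolding restriction_monoid_def restriction_semigroup_def times_monoid_def
    by (auto simp: T S.mul_assoc S.rs_mul_rs S.rp_rp_mul
        intro: S.rs_commute S.rs_mul_left S.rp_commute S.mul_rp_right)
qed

lemma rhom_fst_times_monoid: "rhom (times_monoid S tmul tone) S fst"
  by (auto simp: rhom_def times_monoid_def)

section \<open>The monoid M(T,E)\<close>

lemma Nil_in_words [simp]: "[] \<in> words A"
  by (simp add: words_def)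

lemma append_in_words_iff [simp]: "s @ t \<in> words A \<longleftrightarrow> s \<in> words A \<and> t \<in> words A"
  by (auto simp: words_def)

locale restr_monoid_words = restr_monoid +
  fixes A :: "'a set"
  assumes alphabet_closed: "A \<subseteq> car S"
begin

abbreviation val ("\<langle>_\<rangle>") where "\<langle>v\<rangle> \<equiv> wval S v"
abbreviation M where "M \<equiv> MTE S A"

lemma wval_Nil [simp]: "\<langle>[]\<rangle> = \<one>"
  by (simp add: wval_def)

lemma wval_Cons [simp]: "\<langle>a # v\<rangle> = a \<cdot> \<langle>v\<rangle>"
  by (simp add: wval_def)

lemma wval_closed [simp]: "v \<in> words A \<Longrightarrow> \<langle>v\<rangle> \<in> car S"
  using alphabet_closed by (induction v) (auto simp: words_def)

lemma wval_append: "s \<in> words A \<Longrightarrow> t \<in> words A \<Longrightarrow> \<langle>s @ t\<rangle> = \<langle>s\<rangle> \<cdot> \<langle>t\<rangle>"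
  using alphabet_closed by (induction s) (auto simp: words_def mul_assoc)

lemma wval_image: "wval S ` words A \<subseteq> car S"
  using wval_closed by blast

lemma wact_conv: "wact S = elem_act \<circ> wval S"
  by (simp add: fun_eq_iff wact_def elem_act_def)

lemma wact_partially_defined_action: "partially_defined_action (words A) (@) [] E (wact S)"
proof -
  have "partially_defined_action (words A) (@) [] (id ` E) (wact S)"
    by (rule partially_defined_action_pullback[OF _ _ wval_image _ _ _ elem_act_partially_defined_action])
      (simp_all add: wval_append wact_conv option.map_id)
  then show ?thesis
    by simp
qed

lemma wact_axiom_A: "axiom_A (words A) E (ple S) (wact S)"
  unfolding wact_conv by (rule axiom_A_comp[OF elem_act_axiom_A wval_image])

lemma wact_axiom_B: "axiom_B (words A) E (ple S) (wact S)"
  unfolding wact_conv by (rule axiom_B_comp[OF elem_act_axiom_B wval_image])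

lemma wact_axiom_C: "axiom_C (words A) E (wact S)"
  unfolding wact_conv by (rule axiom_C_comp[OF elem_act_axiom_C wval_image])

lemma car_MTE_iff: "(y, v) \<in> car M \<longleftrightarrow> v \<in> words A \<and> y \<in> E \<and> y \<preceq> \<langle>v\<rangle>\<^sup>\<oplus>"
  by (auto simp: MTE_def Mmon_def wact_conv ran_elem_act)

lemma proj_pair_in_MTE: "e \<in> E \<Longrightarrow> (e, []) \<in> car M"
  by (simp add: car_MTE_iff ple_idt)

lemma idt_MTE: "idt M = (\<one>, [])"
  by (simp add: MTE_def Mmon_def)

lemma rp_MTE: "rp M (y, v) = (y, [])"
  by (simp add: MTE_def Mmon_def)

lemma rs_MTE: "(y, v) \<in> car M \<Longrightarrow> rs M (y, v) = ((y \<cdot> \<langle>v\<rangle>)\<^sup>\<star>, [])"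
  unfolding car_MTE_iff by (simp add: MTE_def Mmon_def wact_conv rev_elem_act)

lemma mul_MTE:
  assumes xs: "(x, s) \<in> car M" and y: "y \<in> E"
  shows "mul M (x, s) (y, t) = ((x \<cdot> \<langle>s\<rangle> \<cdot> y)\<^sup>\<oplus>, s @ t)"
proof -
  have s: "s \<in> words A" and x: "x \<in> E" "x \<preceq> \<langle>s\<rangle>\<^sup>\<oplus>"
    using xs by (auto simp: car_MTE_iff)
  define r where "r = (x \<cdot> \<langle>s\<rangle>)\<^sup>\<star>"
  have r: "r \<in> E" "r \<preceq> \<langle>s\<rangle>\<^sup>\<star>"
    unfolding r_def using s x rs_mul_le by auto
  have "r \<cdot> y \<preceq> \<langle>s\<rangle>\<^sup>\<star>"
    using ple_trans[OF ple_meet_left r(2)] r(1) s y by simp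
  then have "elem_act \<langle>s\<rangle> (r \<cdot> y) = Some ((\<langle>s\<rangle> \<cdot> (r \<cdot> y))\<^sup>\<oplus>)"
    using r(1) y by (simp add: elem_act_def)
  also have "\<langle>s\<rangle> \<cdot> (r \<cdot> y) = x \<cdot> \<langle>s\<rangle> \<cdot> y"
    unfolding r_def using s x y by (simp add: mul_assoc[symmetric] mul_proj_left[symmetric])
  finally have act: "elem_act \<langle>s\<rangle> (r \<cdot> y) = Some ((x \<cdot> \<langle>s\<rangle> \<cdot> y)\<^sup>\<oplus>)" .
  have "mul M (x, s) (y, t) = (the (elem_act \<langle>s\<rangle> (pa_rev E elem_act \<langle>s\<rangle> x \<cdot> y)), s @ t)"
    by (simp add: MTE_def Mmon_def wact_conv)
  also have "pa_rev E elem_act \<langle>s\<rangle> x = r"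
    unfolding r_def using s x by (simp add: rev_elem_act)
  finally show ?thesis
    using act by simp
qed

lemma rp_mul_wval_MTE: "(y, v) \<in> car M \<Longrightarrow> (y \<cdot> \<langle>v\<rangle>)\<^sup>\<oplus> = y"
  unfolding car_MTE_iff by (metis ple_def rp_proj_mul wval_closed)

lemma MTE_mul_closed: "a \<in> car M \<Longrightarrow> b \<in> car M \<Longrightarrow> mul M a b \<in> car M"
  by (cases a, cases b) (auto simp: car_MTE_iff mul_MTE wval_append rp_proj_mul_proj_le)

lemma MTE_rs_closed: "a \<in> car M \<Longrightarrow> rs M a \<in> car M"
  by (cases a) (auto simp: rs_MTE car_MTE_iff ple_idt)

lemma MTE_rp_closed: "a \<in> car M \<Longrightarrow> rp M a \<in> car M"
  by (cases a) (simp add: rp_MTE car_MTE_iff ple_idt)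

lemma MTE_idt_closed: "idt M \<in> car M"
  by (simp add: idt_MTE proj_pair_in_MTE)

definition embed :: "'a \<times> 'a list \<Rightarrow> 'a \<times> 'a list" where
  "embed = (\<lambda>(y, v). (y \<cdot> \<langle>v\<rangle>, v))"

lemma rhom_embed: "rhom M (times_monoid S (@) []) embed"
  unfolding rhom_def
proof (intro conjI ballI)
  show "embed ` car M \<subseteq> car (times_monoid S (@) [])"
    by (auto simp: embed_def times_monoid_def car_MTE_iff)
  fix a assume a: "a \<in> car M"
  then obtain y v where yv: "a = (y, v)" "v \<in> words A" "y \<in> E"
    by (cases a) (auto simp: car_MTE_iff)
  show "embed (rs M a) = rs (times_monoid S (@) []) (embed a)"
    using a yv by (simp add: rs_MTE embed_def times_monoid_def)
  show "embed (rp M a) = rp (times_monoid S (@) []) (embed a)"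
    using a yv rp_mul_wval_MTE by (simp add: rp_MTE embed_def times_monoid_def)
  fix b assume b: "b \<in> car M"
  then obtain z w where zw: "b = (z, w)" "w \<in> words A" "z \<in> E"
    by (cases b) (auto simp: car_MTE_iff)
  show "embed (mul M a b) = mul (times_monoid S (@) []) (embed a) (embed b)"
    using a yv zw rp_proj_mul_proj_mul[of y "\<langle>v\<rangle>" z]
    by (simp add: mul_MTE embed_def times_monoid_def wval_append mul_assoc[symmetric])
next
  show "embed (idt M) = idt (times_monoid S (@) [])"
    by (simp add: idt_MTE embed_def times_monoid_def)
qed

lemma inj_on_embed: "inj_on embed (car M)"
proof (rule inj_onI)
  fix a b assume "a \<in> car M" "b \<in> car M" "embed a = embed b"
  then show "a = b"
    by (cases a, cases b) (auto simp: embed_def dest!: rp_mul_wval_MTE)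
qed

lemma restriction_monoid_MTE: "restriction_monoid M"
  by (rule restriction_monoid_embedding[OF restriction_monoid_times_monoid[OF restriction_monoid]
        rhom_embed inj_on_embed MTE_mul_closed MTE_rs_closed MTE_rp_closed MTE_idt_closed]) simp_all

lemma rhom_MTE: "rhom M S (\<lambda>(e, v). e \<cdot> \<langle>v\<rangle>)"
proof -
  have "(\<lambda>(e, v). e \<cdot> \<langle>v\<rangle>) = fst \<circ> embed"
    by (auto simp: embed_def)
  then show ?thesis
    using rhom_comp[OF rhom_embed rhom_fst_times_monoid] by simp
qed

end

section \<open>The congruence sigma on M(T,E)\<close>

context restr_monoid_words
begin

lemma proj_MTE: "proj M = (\<lambda>e. (e, [])) ` E"
proof (intro set_eqI iffI)
  fix p assume "p \<in> proj M"
  then obtain y v where "(y, v) \<in> car M" "p = rs M (y, v)"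
    unfolding proj_def by auto
  then show "p \<in> (\<lambda>e. (e, [])) ` E"
    by (auto simp: rs_MTE car_MTE_iff)
next
  fix p :: "'a \<times> 'a list" assume "p \<in> (\<lambda>e. (e, [])) ` E"
  then obtain e where e: "e \<in> E" "p = (e, [])"
    by blast
  then have "p = rs M (e, [])"
    by (simp add: rs_MTE proj_pair_in_MTE)
  then show "p \<in> proj M"
    unfolding proj_def using e proj_pair_in_MTE by blast
qed

lemma mul_proj_MTE:
  assumes "e \<in> E" "(y, v) \<in> car M"
  shows "mul M (e, []) (y, v) = (e \<cdot> y, v)"
proof -
  have "y \<in> E"
    using assms(2) by (simp add: car_MTE_iff)
  then show ?thesis
    using mul_MTE[OF proj_pair_in_MTE[OF assms(1)], of y v] assms(1) by simp
qed

lemma nleq_proj_MTE: "e \<in> E \<Longrightarrow> g \<in> E \<Longrightarrow> nleq M (e, []) (g, []) \<longleftrightarrow> e \<preceq> g"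
  by (auto simp: nleq_def proj_MTE mul_proj_MTE proj_pair_in_MTE ple_meet_right ple_def mul_assoc)

lemma snd_mul_MTE: "snd (mul M a b) = snd a @ snd b"
  by (cases a, cases b) (simp add: MTE_def Mmon_def)

lemma snd_rs_MTE: "snd (rs M a) = []" and snd_rp_MTE: "snd (rp M a) = []"
  by (cases a, simp add: MTE_def Mmon_def)+

lemma sigma_MTE: "sigma M = {(a, b). a \<in> car M \<and> b \<in> car M \<and> snd a = snd b}"
  (is "_ = ?R")
proof
  have "rcong M ?R"
    unfolding rcong_def
    by (auto intro!: equivI simp: refl_on_def sym_def trans_def MTE_mul_closed MTE_rs_closed
        MTE_rp_closed snd_mul_MTE snd_rs_MTE snd_rp_MTE)
  moreover have "proj M \<times> proj M \<subseteq> ?R"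
    by (auto simp: proj_MTE proj_pair_in_MTE)
  ultimately show "sigma M \<subseteq> ?R"
    unfolding sigma_def by blast
next
  show "?R \<subseteq> sigma M"
    unfolding sigma_def
  proof (rule Inter_greatest)
    fix R assume "R \<in> {R. rcong M R \<and> proj M \<times> proj M \<subseteq> R}"
    then have R: "equiv (car M) R" "proj M \<times> proj M \<subseteq> R"
      and mul_right: "\<And>a b c. (a, b) \<in> R \<Longrightarrow> c \<in> car M \<Longrightarrow> (mul M a c, mul M b c) \<in> R"
      unfolding rcong_def by blast+
    have absorb: "((e \<cdot> f, v), (f, v)) \<in> R" if "(e, v) \<in> car M" "(f, v) \<in> car M" for e f v
    proof -
      have e: "e \<in> E" and f: "f \<in> E"
        using that by (simp_all add: car_MTE_iff)
      have "((e, []), (\<one>, [])) \<in> R"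
        using R(2) e by (auto simp: proj_MTE)
      from mul_right[OF this that(2)] show ?thesis
        using e f that(2) by (simp add: mul_proj_MTE)
    qed
    show "?R \<subseteq> R"
    proof (safe)
      fix e v f w assume ev: "(e, v) \<in> car M" and fw: "(f, w) \<in> car M" and "snd (e, v) = snd (f, w)"
      then have fv: "(f, v) \<in> car M"
        by simp
      have "((e, v), (f \<cdot> e, v)) \<in> R"
        using absorb[OF fv ev] R(1) by (auto elim: equivE symE)
      moreover have "f \<cdot> e = e \<cdot> f"
        using ev fv by (simp add: car_MTE_iff proj_commute)
      ultimately show "((e, v), (f, w)) \<in> R"
        using absorb[OF ev fv] R(1) \<open>snd (e, v) = snd (f, w)\<close> by (auto elim: equivE transE)
    qed
  qed
qed

lemma MTE_proper: "proper M"
  unfolding proper_def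
proof (intro ballI conjI impI)
  fix a b assume a: "a \<in> car M" and b: "b \<in> car M"
  then obtain x s y t where ab: "a = (x, s)" "b = (y, t)"
    by fastforce
  show "a = b" if "rs M a = rs M b \<and> (a, b) \<in> sigma M"
  proof -
    have "s = t" and "(x \<cdot> \<langle>s\<rangle>)\<^sup>\<star> = (y \<cdot> \<langle>s\<rangle>)\<^sup>\<star>"
      using that a b ab by (auto simp: sigma_MTE rs_MTE)
    then have "(\<langle>s\<rangle> \<cdot> (x \<cdot> \<langle>s\<rangle>)\<^sup>\<star>)\<^sup>\<oplus> = (\<langle>s\<rangle> \<cdot> (y \<cdot> \<langle>s\<rangle>)\<^sup>\<star>)\<^sup>\<oplus>"
      by simp
    then show ?thesis
      using a b ab \<open>s = t\<close> by (simp add: car_MTE_iff rp_mul_rs_cancel)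
  qed
  show "a = b" if "rp M a = rp M b \<and> (a, b) \<in> sigma M"
    using that ab by (simp add: sigma_MTE rp_MTE)
qed

definition word_class :: "'a list \<Rightarrow> ('a \<times> 'a list) set" where
  "word_class t = {b \<in> car M. snd b = t}"

lemma sigma_class_MTE: "a \<in> car M \<Longrightarrow> sigma M `` {a} = word_class (snd a)"
  by (auto simp: sigma_MTE word_class_def)

lemma top_in_word_class: "t \<in> words A \<Longrightarrow> (\<langle>t\<rangle>\<^sup>\<oplus>, t) \<in> word_class t"
  by (simp add: word_class_def car_MTE_iff ple_refl)

lemma word_class_le_top:
  assumes "b \<in> word_class t"
  shows "nleq M b (\<langle>t\<rangle>\<^sup>\<oplus>, t)"
proof -
  obtain z where b: "b = (z, t)" "(z, t) \<in> car M"
    using assms by (cases b) (auto simp: word_class_def)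
  then have "z \<in> E" "z = z \<cdot> \<langle>t\<rangle>\<^sup>\<oplus>"
    by (auto simp: car_MTE_iff ple_def)
  moreover have "(\<langle>t\<rangle>\<^sup>\<oplus>, t) \<in> car M"
    using b(2) top_in_word_class by (auto simp: word_class_def car_MTE_iff)
  ultimately have "b = mul M (z, []) (\<langle>t\<rangle>\<^sup>\<oplus>, t)"
    using b(1) by (simp add: mul_proj_MTE)
  then show ?thesis
    unfolding nleq_def proj_MTE using \<open>z \<in> E\<close> by blast
qed

lemma MTE_F_restriction: "F_restriction M"
  unfolding F_restriction_def
proof
  fix a assume a: "a \<in> car M"
  then have "snd a \<in> words A"
    by (cases a) (simp add: car_MTE_iff)
  then show "\<exists>m\<in>sigma M `` {a}. \<forall>b\<in>sigma M `` {a}. nleq M b m"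
    unfolding sigma_class_MTE[OF a] using top_in_word_class word_class_le_top by blast
qed

lemma MTE_ample: "ample M"
  unfolding ample_def
proof (intro ballI conjI impI)
  fix a b c assume a: "a \<in> car M" and b: "b \<in> car M" and c: "c \<in> car M"
  obtain x s y s' z t where abc: "a = (x, s)" "b = (y, s')" "c = (z, t)"
    by (cases a, cases b, cases c) auto
  have s: "s \<in> words A" "x \<in> E" and s': "s' \<in> words A" "y \<in> E" and t: "t \<in> words A" "z \<in> E"
    using a b c abc by (auto simp: car_MTE_iff)
  show "mul M a (rp M c) = mul M b (rp M c)" if "mul M a c = mul M b c"
    using that a b abc t by (auto simp: mul_MTE rp_MTE)
  show "mul M (rs M c) a = mul M (rs M c) b" if "mul M c a = mul M c b"
  proof -
    have "s = s'" and eq: "(z \<cdot> \<langle>t\<rangle> \<cdot> x)\<^sup>\<oplus> = (z \<cdot> \<langle>t\<rangle> \<cdot> y)\<^sup>\<oplus>"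
      using that c abc s s' by (simp_all add: mul_MTE)
    have "(z \<cdot> \<langle>t\<rangle>)\<^sup>\<star> \<cdot> x = ((z \<cdot> \<langle>t\<rangle> \<cdot> x)\<^sup>\<oplus> \<cdot> \<langle>t\<rangle>)\<^sup>\<star>"
      using s t by (simp add: rs_rp_mul_proj_mul)
    also have "\<dots> = (z \<cdot> \<langle>t\<rangle>)\<^sup>\<star> \<cdot> y"
      using s' t by (simp add: eq rs_rp_mul_proj_mul)
    finally have "(z \<cdot> \<langle>t\<rangle>)\<^sup>\<star> \<cdot> x = (z \<cdot> \<langle>t\<rangle>)\<^sup>\<star> \<cdot> y" .
    then show ?thesis
      using c abc a b \<open>s = s'\<close> t by (simp add: rs_MTE mul_proj_MTE)
  qed
qed

lemma quotient_MTE: "car M // sigma M = word_class ` words A"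
proof (intro set_eqI iffI)
  fix X assume "X \<in> car M // sigma M"
  then obtain a where "a \<in> car M" "X = word_class (snd a)"
    by (auto simp: quotient_def sigma_class_MTE)
  then show "X \<in> word_class ` words A"
    by (cases a) (auto simp: car_MTE_iff)
next
  fix X assume "X \<in> word_class ` words A"
  then obtain t where t: "t \<in> words A" "X = word_class t"
    by blast
  have "(\<langle>t\<rangle>\<^sup>\<oplus>, t) \<in> car M"
    using top_in_word_class[OF t(1)] by (simp add: word_class_def)
  then show "X \<in> car M // sigma M"
    unfolding quotient_def using sigma_class_MTE t(2) by fastforce
qed

lemma some_in_word_class: "t \<in> words A \<Longrightarrow> (SOME b. b \<in> word_class t) \<in> word_class t"
  by (rule someI, rule top_in_word_class)

lemma word_of_class: "t \<in> words A \<Longrightarrow> snd (SOME b. b \<in> word_class t) = t"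
  using some_in_word_class by (simp add: word_class_def)

lemma qmul_word_class:
  assumes "s \<in> words A" "t \<in> words A"
  shows "qmul M (word_class s) (word_class t) = word_class (s @ t)"
proof -
  let ?a = "SOME a. a \<in> word_class s" and ?b = "SOME b. b \<in> word_class t"
  have "?a \<in> car M" "?b \<in> car M"
    using some_in_word_class assms by (simp_all add: word_class_def)
  then show ?thesis
    unfolding qmul_def
    by (simp add: sigma_class_MTE MTE_mul_closed snd_mul_MTE word_of_class assms)
qed

lemma sigma_class_idt_MTE: "sigma M `` {idt M} = word_class []"
  using sigma_class_MTE[OF MTE_idt_closed] by (simp add: idt_MTE)

lemma uact_word_class:
  assumes t: "t \<in> words A" and e: "e \<in> E"
  shows "uact M (word_class t) (e, []) = map_option (\<lambda>z. (z, [])) (wact S t e)"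
proof -
  have below: "nleq M (e, []) (rs M b) \<longleftrightarrow> e \<preceq> (fst b \<cdot> \<langle>t\<rangle>)\<^sup>\<star>" if "b \<in> word_class t" for b
    using that e by (cases b) (auto simp: word_class_def rs_MTE nleq_proj_MTE car_MTE_iff)
  have fst_E: "fst b \<in> E" if "b \<in> word_class t" for b
    using that by (cases b) (auto simp: word_class_def car_MTE_iff)
  have exists: "(\<exists>b\<in>word_class t. nleq M (e, []) (rs M b)) \<longleftrightarrow> e \<preceq> \<langle>t\<rangle>\<^sup>\<star>"
  proof
    assume "\<exists>b\<in>word_class t. nleq M (e, []) (rs M b)"
    then obtain b where "b \<in> word_class t" "e \<preceq> (fst b \<cdot> \<langle>t\<rangle>)\<^sup>\<star>"
      using below by blast
    then show "e \<preceq> \<langle>t\<rangle>\<^sup>\<star>"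
      using ple_trans[OF _ rs_mul_le] fst_E e t by simp
  next
    assume "e \<preceq> \<langle>t\<rangle>\<^sup>\<star>"
    then show "\<exists>b\<in>word_class t. nleq M (e, []) (rs M b)"
      using top_in_word_class[OF t] below t by fastforce
  qed
  have act: "rp M (mul M b (e, [])) = ((\<langle>t\<rangle> \<cdot> e)\<^sup>\<oplus>, [])"
    if "b \<in> word_class t" "nleq M (e, []) (rs M b)" for b
    using that below[OF that(1)] fst_E[OF that(1)] e t
    by (cases b) (simp add: word_class_def mul_MTE rp_MTE proj_mul_absorb)
  show ?thesis
  proof (cases "e \<preceq> \<langle>t\<rangle>\<^sup>\<star>")
    case True
    then have ex: "\<exists>b. b \<in> word_class t \<and> nleq M (e, []) (rs M b)"
      using exists by blast
    show ?thesis
      using someI_ex[OF ex] act True e exists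
      by (simp add: uact_def proj_MTE wact_def)
  next
    case False
    then show ?thesis
      using exists by (simp add: uact_def wact_def)
  qed
qed

lemma MTE_underlying_partially_defined_action:
  "partially_defined_action (car M // sigma M) (qmul M) (sigma M `` {idt M}) (proj M) (uact M)"
  unfolding quotient_MTE sigma_class_idt_MTE proj_MTE
  by (rule partially_defined_action_pullback[OF _ _ _ _ _ _ wact_partially_defined_action,
        where h = "\<lambda>X. snd (SOME b. b \<in> X)"])
    (auto simp: qmul_word_class word_of_class uact_word_class)

lemma MTE_ultra_F_restriction: "ultra_F_restriction M"
  unfolding ultra_F_restriction_def
  using MTE_proper MTE_F_restriction MTE_underlying_partially_defined_action by blast

lemma projection_separating_MTE: "projection_separating M (\<lambda>(e, v). e \<cdot> \<langle>v\<rangle>)"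
  by (auto simp: projection_separating_def proj_MTE inj_on_def)

end

section \<open>Surjectivity onto a generated monoid\<close>

context restr_monoid_words
begin

lemma gen_by_normal_form: "x \<in> gen_by S A \<Longrightarrow> \<exists>e\<in>E. \<exists>v\<in>words A. x = e \<cdot> \<langle>v\<rangle>"
proof (induction rule: gen_by.induct)
  case (gen_base a)
  then show ?case
    using alphabet_closed by (intro bexI[of _ \<one>] bexI[of _ "[a]"]) (auto simp: words_def)
next
  case gen_one
  then show ?case
    by (intro bexI[of _ \<one>] bexI[of _ "[]"]) simp_all
next
  case (gen_mul x y)
  then obtain e u f v where e: "e \<in> E" and u: "u \<in> words A" and x: "x = e \<cdot> \<langle>u\<rangle>"
    and f: "f \<in> E" and v: "v \<in> words A" and y: "y = f \<cdot> \<langle>v\<rangle>"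
    by blast
  have "x \<cdot> y = e \<cdot> (\<langle>u\<rangle> \<cdot> f) \<cdot> \<langle>v\<rangle>"
    using e u f v by (simp add: x y mul_assoc)
  also have "\<dots> = e \<cdot> ((\<langle>u\<rangle> \<cdot> f)\<^sup>\<oplus> \<cdot> \<langle>u\<rangle>) \<cdot> \<langle>v\<rangle>"
    using u f by (simp add: mul_proj_right[symmetric])
  also have "\<dots> = e \<cdot> (\<langle>u\<rangle> \<cdot> f)\<^sup>\<oplus> \<cdot> \<langle>u @ v\<rangle>"
    using e u f v by (simp add: mul_assoc wval_append)
  finally show ?case
    using e u f v by (intro bexI[of _ "e \<cdot> (\<langle>u\<rangle> \<cdot> f)\<^sup>\<oplus>"] bexI[of _ "u @ v"]) simp_all
next
  case (gen_rs x)
  then show ?case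
    by (intro bexI[of _ "x\<^sup>\<star>"] bexI[of _ "[]"]) auto
next
  case (gen_rp x)
  then show ?case
    by (intro bexI[of _ "x\<^sup>\<oplus>"] bexI[of _ "[]"]) auto
qed

lemma MTE_image:
  assumes gen: "car S = gen_by S A"
  shows "(\<lambda>(e, v). e \<cdot> \<langle>v\<rangle>) ` car M = car S"
proof
  show "(\<lambda>(e, v). e \<cdot> \<langle>v\<rangle>) ` car M \<subseteq> car S"
    using rhom_MTE by (simp add: rhom_def)
  show "car S \<subseteq> (\<lambda>(e, v). e \<cdot> \<langle>v\<rangle>) ` car M"
  proof
    fix x assume "x \<in> car S"
    then obtain e v where ev: "e \<in> E" "v \<in> words A" "x = e \<cdot> \<langle>v\<rangle>"
      using gen_by_normal_form gen by blast
    then have "(e \<cdot> \<langle>v\<rangle>\<^sup>\<oplus>, v) \<in> car M" and "x = e \<cdot> \<langle>v\<rangle>\<^sup>\<oplus> \<cdot> \<langle>v\<rangle>"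
      by (simp_all add: car_MTE_iff ple_meet_right mul_assoc)
    then show "x \<in> (\<lambda>(e, v). e \<cdot> \<langle>v\<rangle>) ` car M"
      by force
  qed
qed

end

theorem lemma3p10:
  fixes S :: "'a rmonoid" and A :: "'a set"
  assumes "restriction_monoid S"
    and "car S = gen_by S A"
  shows "partially_defined_action (words A) (@) [] (proj S) (wact S)
       \<and> axiom_A (words A) (proj S) (ple S) (wact S)
       \<and> axiom_B (words A) (proj S) (ple S) (wact S)
       \<and> axiom_C (words A) (proj S) (wact S)
       \<and> restriction_monoid (MTE S A)
       \<and> ultra_F_restriction (MTE S A)
       \<and> ample (MTE S A)
       \<and> rhom (MTE S A) S (\<lambda>(e, v). mul S e (wval S v))
       \<and> (\<lambda>(e, v). mul S e (wval S v)) ` car (MTE S A) = car S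
       \<and> projection_separating (MTE S A) (\<lambda>(e, v). mul S e (wval S v))"
proof -
  have "A \<subseteq> car S"
    using assms(2) by (auto intro: gen_by.gen_base)
  then interpret restr_monoid_words S A
    using assms(1) by (simp add: restr_monoid_words_def restr_monoid_def restr_monoid_words_axioms_def)
  show ?thesis
    using wact_partially_defined_action wact_axiom_A wact_axiom_B wact_axiom_C
      restriction_monoid_MTE MTE_ultra_F_restriction MTE_ample rhom_MTE MTE_image[OF assms(2)]
      projection_separating_MTE
    by (intro conjI) assumption+
qed

end
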